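(* Let $(X,\mathcal{A})$ be a measurable space, $f_1,f_2\in\mathcal{F}^{(X,\mathcal{A})}$ comonotone, and $\star:[0,\infty)^2\to[0,\infty)$ continuous, non-decreasing in both arguments and bounded from above by the minimum ($a\star b\le\min(a,b)$). Let $\omega_j,\xi_j\in(0,\infty)$, $j=0,1,2$, be such that $x^{1/(\xi_0\omega_0)}\le x\le x^{1/(\xi_i\omega_i)}$ and $x\ge x^{\omega_i/\omega_0}$ for all $x\in[0,\infty)$ and $i=1,2$, and let $m\in\mathcal{M}^{(X,\mathcal{A})}$ be a monotone measure with $\mathbf{Su}(m,f_i^{\xi_i})<\infty$, $i=1,2$. Then \[ \big[\mathbf{Su}\big(m,(f_1\star f_2)^{\xi_0}\big)\big]^{\omega_0}\ \ge\ \big[\mathbf{Su}(m,f_1^{\xi_1})\big]^{\omega_1}\star\big[\mathbf{Su}(m,f_2^{\xi_2})\big]^{\omega_2}. \]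
   Context: A monotone measure on $(X,\mathcal{A})$ is $m:\mathcal{A}\to[0,\infty]$ with $m(\emptyset)=0$, $m(X)>0$, $m(A)\le m(B)$ for $A\subseteq B$; $\mathcal{M}^{(X,\mathcal{A})}$ is the set of these; $\mathcal{F}^{(X,\mathcal{A})}$ the set of $\mathcal{A}$-measurable $f:X\to[0,\infty]$. $\mathbf{Su}(m,f)=\sup\{\min(t,m(\{f\ge t\})) : t\in(0,\infty]\}$. $f_1,f_2$ are comonotone if $(f_1(x)-f_1(y))(f_2(x)-f_2(y))\ge0$ for all $x,y$. Operations on functions are pointwise. *)

theory Defs
  imports "HOL-Analysis.Analysis"
begin

definition monotone_measure :: "'a measure \<Rightarrow> ('a set \<Rightarrow> ennreal) \<Rightarrow> bool" where
  "monotone_measure M m \<longleftrightarrow>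
     m {} = 0 \<and> m (space M) > 0 \<and>
     (\<forall>A\<in>sets M. \<forall>B\<in>sets M. A \<subseteq> B \<longrightarrow> m A \<le> m B)"

definition sugeno :: "'a measure \<Rightarrow> ('a set \<Rightarrow> ennreal) \<Rightarrow> ('a \<Rightarrow> ennreal) \<Rightarrow> ennreal" where
  "sugeno M m f = (SUP t\<in>{0<..}. min t (m {x\<in>space M. t \<le> f x}))"

text \<open>Comonotonicity: (f1 x - f1 y)(f2 x - f2 y) \<ge> 0, i.e. never strictly opposite.\<close>
definition comonotone :: "'a measure \<Rightarrow> ('a \<Rightarrow> ennreal) \<Rightarrow> ('a \<Rightarrow> ennreal) \<Rightarrow> bool" where
  "comonotone M f1 f2 \<longleftrightarrow>
     (\<forall>x\<in>space M. \<forall>y\<in>space M. \<not> (f1 x < f1 y \<and> f2 y < f2 x))"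

text \<open>Power x^r on [0,\<infinity>] for r > 0, with \<infinity>^r = \<infinity>.\<close>
definition enn_powr :: "ennreal \<Rightarrow> real \<Rightarrow> ennreal" where
  "enn_powr x r = (if x = \<infinity> then \<infinity> else ennreal (enn2real x powr r))"

text \<open>Extension of an operation on [0,\<infinity>) to [0,\<infinity>] (by monotone supremum);
  agrees with the operation on finite arguments when it is non-decreasing.\<close>
definition star_ext :: "(real \<Rightarrow> real \<Rightarrow> real) \<Rightarrow> ennreal \<Rightarrow> ennreal \<Rightarrow> ennreal" where
  "star_ext s a b = (SUP p\<in>{(x, y). 0 \<le> x \<and> 0 \<le> y \<and> ennreal x \<le> a \<and> ennreal y \<le> b}.
                        ennreal (s (fst p) (snd p)))"

end

theory Submission
  imports Defs
begin

text \<open>The exponent hypotheses force \<open>\<xi>\<^sub>i \<omega>\<^sub>i = 1\<close> and \<open>\<omega>\<^sub>i = \<omega>\<^sub>0\<close>, so all three powers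
  \<open>\<xi>\<^sub>i\<close> equal \<open>\<xi> = 1/\<omega>\<close>. For \<open>s < Su(m, f\<^sub>1\<^sup>\<xi>)\<close> and \<open>t < Su(m, f\<^sub>2\<^sup>\<xi>)\<close> there are level sets
  \<open>{f\<^sub>1\<^sup>\<xi> \<ge> r\<^sub>1}\<close>, \<open>{f\<^sub>2\<^sup>\<xi> \<ge> r\<^sub>2}\<close> of measure above \<open>s\<close> resp. \<open>t\<close>; comonotonicity makes them
  nested, so their intersection has measure at least \<open>min s t\<close>. On it
  \<open>(f\<^sub>1 \<star> f\<^sub>2)\<^sup>\<xi> \<ge> (s\<^sup>\<omega> \<star> t\<^sup>\<omega>)\<^sup>\<xi> =: c\<close>, and \<open>c \<le> min s t\<close> because \<open>\<star> \<le> min\<close>; hence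
  \<open>c \<le> Su(m, (f\<^sub>1 \<star> f\<^sub>2)\<^sup>\<xi>)\<close>. Letting \<open>s, t\<close> increase to the integrals and using continuity
  of \<open>\<star>\<close> gives the claim.\<close>

lemma powr_eq_1_if_powr_le_self:
  assumes "\<And>x::real. 0 \<le> x \<Longrightarrow> x powr a \<le> x" shows "a = 1"
proof -
  have "2 powr a \<le> 2 powr 1" using assms[of 2] by simp
  then have "a \<le> 1" using powr_le_cancel_iff[of 2 a 1] by linarith
  have "1 / 2 powr a \<le> 1/2" using assms[of "1/2"] by (simp add: powr_divide)
  then have "2 powr 1 \<le> 2 powr a" by (simp add: field_simps)
  then have "1 \<le> a" using powr_le_cancel_iff[of 2 1 a] by linarith
  with \<open>a \<le> 1\<close> show ?thesis by simp
qed

lemma powr_eq_1_if_self_le_powr: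
  assumes "\<And>x::real. 0 \<le> x \<Longrightarrow> x \<le> x powr a" shows "a = 1"
proof -
  have "2 powr 1 \<le> 2 powr a" using assms[of 2] by simp
  then have "1 \<le> a" using powr_le_cancel_iff[of 2 1 a] by linarith
  have "1/2 \<le> 1 / 2 powr a" using assms[of "1/2"] by (simp add: powr_divide)
  then have "2 powr a \<le> 2 powr 1" by (simp add: field_simps)
  then have "a \<le> 1" using powr_le_cancel_iff[of 2 a 1] by linarith
  with \<open>1 \<le> a\<close> show ?thesis by simp
qed

lemma continuous_on_le_from_below:
  fixes F :: "real \<Rightarrow> real \<Rightarrow> real"
  assumes cont: "continuous_on ({0..} \<times> {0..}) (\<lambda>(u, v). F u v)"
    and "0 < a" "0 < b"
    and below: "\<And>u v. 0 < u \<Longrightarrow> u < a \<Longrightarrow> 0 < v \<Longrightarrow> v < b \<Longrightarrow> F u v \<le> K"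
  shows "F a b \<le> K"
proof -
  define u where "u n = a - (a/2) * inverse (real (Suc n))" for n
  define v where "v n = b - (b/2) * inverse (real (Suc n))" for n
  have inv: "0 < inverse (real (Suc n))" "inverse (real (Suc n)) \<le> 1" for n
    by (auto simp: inverse_le_1_iff)
  have u: "0 < u n" "u n < a" and v: "0 < v n" "v n < b" for n
    unfolding u_def v_def using assms(2,3) inv[of n] by (auto simp: mult_le_cancel_left1)
  have "u \<longlonglongrightarrow> a - (a/2) * 0" "v \<longlonglongrightarrow> b - (b/2) * 0"
    unfolding u_def v_def by (intro tendsto_intros LIMSEQ_inverse_real_of_nat)+
  then have "(\<lambda>n. (u n, v n)) \<longlonglongrightarrow> (a, b)"
    by (intro tendsto_Pair) auto
  from continuous_on_tendsto_compose[OF cont this]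
  have "(\<lambda>n. F (u n) (v n)) \<longlonglongrightarrow> F a b"
    using u v assms(2,3) by (simp add: less_imp_le)
  then show ?thesis
    by (rule LIMSEQ_le_const2) (use below u v in blast)
qed

lemma borel_measurable_enn_powr [measurable]:
  assumes [measurable]: "f \<in> borel_measurable M"
  shows "(\<lambda>x. enn_powr (f x) r) \<in> borel_measurable M"
proof -
  have [measurable]: "(\<lambda>x. enn2real (f x) powr r) \<in> borel_measurable M"
    by (intro powr_real_measurable) auto
  show ?thesis unfolding enn_powr_def by measurable
qed

lemma enn_powr_ennreal: "0 \<le> w \<Longrightarrow> enn_powr (ennreal w) r = ennreal (w powr r)"
  by (simp add: enn_powr_def)

lemma enn_powr_mono:
  assumes "x \<le> y" "0 < r" shows "enn_powr x r \<le> enn_powr y r"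
proof (cases "y = \<infinity>")
  case False
  with assms(1) have "x \<noteq> \<infinity>" "enn2real x \<le> enn2real y"
    by (auto simp: enn2real_mono top.not_eq_extremum top_unique)
  with False assms(2) show ?thesis
    by (simp add: enn_powr_def powr_mono2 ennreal_leI)
qed (simp add: enn_powr_def)

lemma enn_powr_enn_powr_inverse:
  assumes "p * q = 1" shows "enn_powr (enn_powr x p) q = x"
  using assms by (cases x) (auto simp: enn_powr_def powr_powr)

lemma comonotone_enn_powr:
  assumes "comonotone M f1 f2" "0 < p" "0 < q"
  shows "comonotone M (\<lambda>x. enn_powr (f1 x) p) (\<lambda>x. enn_powr (f2 x) q)"
  using assms enn_powr_mono unfolding comonotone_def by (meson not_le)

lemma comonotone_level_sets_nested:
  assumes "comonotone M g1 g2"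
  shows "{x\<in>space M. r1 \<le> g1 x} \<subseteq> {x\<in>space M. r2 \<le> g2 x}
      \<or> {x\<in>space M. r2 \<le> g2 x} \<subseteq> {x\<in>space M. r1 \<le> g1 x}"
  using assms unfolding comonotone_def by (force simp: not_le)

lemma star_ext_ge:
  "0 \<le> u \<Longrightarrow> 0 \<le> v \<Longrightarrow> ennreal u \<le> a \<Longrightarrow> ennreal v \<le> b \<Longrightarrow> ennreal (s u v) \<le> star_ext s a b"
  unfolding star_ext_def by (rule SUP_upper2[where i="(u, v)"]) auto

lemma star_ext_eq_SUP_truncations:
  assumes mono: "\<And>a a' b b'. 0 \<le> a \<Longrightarrow> a \<le> a' \<Longrightarrow> 0 \<le> b \<Longrightarrow> b \<le> b' \<Longrightarrow> s a b \<le> s a' b'"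
  shows "star_ext s a b
    = (SUP n::nat. ennreal (s (enn2real (min a (of_nat n))) (enn2real (min b (of_nat n)))))"
    (is "_ = (SUP n. ?T n)")
proof (rule antisym)
  have fin: "min c (of_nat n) < top" for c :: ennreal and n :: nat
    by (simp add: min.strict_coboundedI2 of_nat_less_top)
  show "star_ext s a b \<le> (SUP n. ?T n)"
    unfolding star_ext_def
  proof (rule SUP_least, clarsimp)
    fix x y assume xy: "0 \<le> x" "0 \<le> y" "ennreal x \<le> a" "ennreal y \<le> b"
    obtain n :: nat where n: "max x y \<le> n" using real_arch_simple by blast
    have "ennreal x \<le> min a (of_nat n)" "ennreal y \<le> min b (of_nat n)"
      using xy n by (simp_all add: ennreal_of_nat_eq_real_of_nat ennreal_leI)
    then have "x \<le> enn2real (min a (of_nat n))" "y \<le> enn2real (min b (of_nat n))"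
      using enn2real_mono[OF _ fin] xy by fastforce+
    then have "ennreal (s x y) \<le> ?T n"
      using mono xy(1,2) by (simp add: ennreal_leI)
    then show "ennreal (s x y) \<le> (SUP n. ?T n)"
      by (rule SUP_upper2[OF UNIV_I])
  qed
  show "(SUP n. ?T n) \<le> star_ext s a b"
    by (rule SUP_least, rule star_ext_ge) (use fin in \<open>auto simp: ennreal_enn2real_if\<close>)
qed

lemma borel_measurable_star_ext:
  fixes s :: "real \<Rightarrow> real \<Rightarrow> real"
  assumes cont: "continuous_on ({0..} \<times> {0..}) (\<lambda>(a, b). s a b)"
    and mono: "\<And>a a' b b'. 0 \<le> a \<Longrightarrow> a \<le> a' \<Longrightarrow> 0 \<le> b \<Longrightarrow> b \<le> b' \<Longrightarrow> s a b \<le> s a' b'"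
    and [measurable]: "f1 \<in> borel_measurable M" "f2 \<in> borel_measurable M"
  shows "(\<lambda>x. star_ext s (f1 x) (f2 x)) \<in> borel_measurable M"
proof -
  \<comment> \<open>Clamping at 0 extends \<open>s\<close> continuously to the whole plane without changing it on the quadrant.\<close>
  have "continuous_on UNIV (\<lambda>p. (\<lambda>(a, b). s a b) (max (fst p) 0, max (snd p) (0::real)))"
    by (rule continuous_on_compose2[OF cont]) (auto intro!: continuous_intros)
  then have s_clamped: "continuous_on UNIV (\<lambda>p. s (max (fst p) 0) (max (snd p) 0))"
    by (simp add: case_prod_beta)
  have "(\<lambda>x. s (max (enn2real (min (f1 x) (of_nat n))) 0) (max (enn2real (min (f2 x) (of_nat n))) 0))
      \<in> borel_measurable M" for n :: nat
    by (rule borel_measurable_continuous_Pair[OF _ _ s_clamped]) measurable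
  then have "(\<lambda>x. SUP n::nat. ennreal (s (enn2real (min (f1 x) (of_nat n))) (enn2real (min (f2 x) (of_nat n)))))
      \<in> borel_measurable M"
    by (simp add: max_absorb1)
  then show ?thesis
    by (simp add: star_ext_eq_SUP_truncations[OF mono])
qed

lemma le_sugeno_if_level_set:
  assumes "monotone_measure M m" "S \<in> sets M" "{x\<in>space M. c \<le> h x} \<in> sets M"
    and "S \<subseteq> {x\<in>space M. c \<le> h x}" "c \<le> m S"
  shows "c \<le> sugeno M m h"
proof (cases "c = 0")
  case False
  have "c \<le> m {x\<in>space M. c \<le> h x}"
    using assms order_trans unfolding monotone_measure_def by blast
  then have "min c (m {x\<in>space M. c \<le> h x}) = c" by simp
  moreover have "min c (m {x\<in>space M. c \<le> h x}) \<le> sugeno M m h"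
    unfolding sugeno_def using False by (intro SUP_upper) (simp add: zero_less_iff_neq_zero)
  ultimately show ?thesis by simp
qed simp

lemma comonotone_common_level_set:
  assumes "comonotone M g1 g2" "g1 \<in> borel_measurable M" "g2 \<in> borel_measurable M"
    and "s < sugeno M m g1" "t < sugeno M m g2"
  obtains S where "S \<in> sets M" "min s t \<le> m S" "\<And>x. x \<in> S \<Longrightarrow> s \<le> g1 x \<and> t \<le> g2 x"
proof -
  obtain r1 where r1: "s < r1" "s < m {x\<in>space M. r1 \<le> g1 x}"
    using assms(4) unfolding sugeno_def less_SUP_iff by auto
  obtain r2 where r2: "t < r2" "t < m {x\<in>space M. r2 \<le> g2 x}"
    using assms(5) unfolding sugeno_def less_SUP_iff by auto
  let ?S1 = "{x\<in>space M. r1 \<le> g1 x}" and ?S2 = "{x\<in>space M. r2 \<le> g2 x}"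
  have "?S1 \<inter> ?S2 = ?S1 \<or> ?S1 \<inter> ?S2 = ?S2"
    using comonotone_level_sets_nested[OF assms(1)] by blast
  then have "min s t \<le> m (?S1 \<inter> ?S2)"
    using r1(2) r2(2) by (auto simp: min_le_iff_disj less_imp_le)
  moreover have "?S1 \<inter> ?S2 \<in> sets M"
    using assms(2,3) by measurable
  moreover have "s \<le> g1 x \<and> t \<le> g2 x" if "x \<in> ?S1 \<inter> ?S2" for x
    using that r1(1) r2(1) by (auto dest: less_imp_le intro: order_trans)
  ultimately show ?thesis using that by blast
qed

lemma star_powr_le_sugeno:
  fixes star :: "real \<Rightarrow> real \<Rightarrow> real"
  assumes [measurable]: "f1 \<in> borel_measurable M" "f2 \<in> borel_measurable M"
    and como: "comonotone M f1 f2"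
    and star_cont: "continuous_on ({0..} \<times> {0..}) (\<lambda>(a, b). star a b)"
    and star_mono: "\<And>a a' b b'. 0 \<le> a \<Longrightarrow> a \<le> a' \<Longrightarrow> 0 \<le> b \<Longrightarrow> b \<le> b'
                       \<Longrightarrow> star a b \<le> star a' b'"
    and star_nonneg: "\<And>a b. 0 \<le> a \<Longrightarrow> 0 \<le> b \<Longrightarrow> 0 \<le> star a b"
    and star_min: "\<And>a b. 0 \<le> a \<Longrightarrow> 0 \<le> b \<Longrightarrow> star a b \<le> min a b"
    and exps: "0 < \<xi>" "\<xi> * \<omega> = 1"
    and mm: "monotone_measure M m"
    and u: "0 \<le> u" "ennreal (u powr \<xi>) < sugeno M m (\<lambda>x. enn_powr (f1 x) \<xi>)"
    and v: "0 \<le> v" "ennreal (v powr \<xi>) < sugeno M m (\<lambda>x. enn_powr (f2 x) \<xi>)"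
  shows "ennreal (star u v powr \<xi>) \<le> sugeno M m (\<lambda>x. enn_powr (star_ext star (f1 x) (f2 x)) \<xi>)"
proof -
  have "0 < \<omega>" using exps by (metis zero_less_mult_pos zero_less_one)
  have [measurable]: "(\<lambda>x. star_ext star (f1 x) (f2 x)) \<in> borel_measurable M"
    using borel_measurable_star_ext[OF star_cont star_mono] by measurable
  have g_meas: "(\<lambda>x. enn_powr (f1 x) \<xi>) \<in> borel_measurable M" "(\<lambda>x. enn_powr (f2 x) \<xi>) \<in> borel_measurable M"
    by measurable
  define w where "w = star u v"
  have "0 \<le> w" "w \<le> u" "w \<le> v" unfolding w_def using star_nonneg star_min u(1) v(1) by auto
  obtain S where S: "S \<in> sets M" "min (ennreal (u powr \<xi>)) (ennreal (v powr \<xi>)) \<le> m S"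
    and on_S: "\<And>x. x \<in> S \<Longrightarrow> ennreal (u powr \<xi>) \<le> enn_powr (f1 x) \<xi> \<and> ennreal (v powr \<xi>) \<le> enn_powr (f2 x) \<xi>"
    using comonotone_common_level_set[OF comonotone_enn_powr[OF como exps(1) exps(1)] g_meas u(2) v(2)]
    by blast
  have le_of_powr_le: "ennreal y \<le> z" if "0 \<le> y" "ennreal (y powr \<xi>) \<le> enn_powr z \<xi>" for y z
    using enn_powr_mono[OF that(2) \<open>0 < \<omega>\<close>] that(1) exps
    by (simp add: enn_powr_enn_powr_inverse enn_powr_ennreal powr_powr)
  have sub: "S \<subseteq> {x\<in>space M. ennreal (w powr \<xi>) \<le> enn_powr (star_ext star (f1 x) (f2 x)) \<xi>}"
  proof safe
    fix x assume "x \<in> S"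
    then show "x \<in> space M" using sets.sets_into_space[OF S(1)] by blast
    from \<open>x \<in> S\<close> have "ennreal u \<le> f1 x" "ennreal v \<le> f2 x"
      using le_of_powr_le[OF u(1)] le_of_powr_le[OF v(1)] on_S by blast+
    then have "ennreal w \<le> star_ext star (f1 x) (f2 x)"
      unfolding w_def by (rule star_ext_ge[OF u(1) v(1)])
    then show "ennreal (w powr \<xi>) \<le> enn_powr (star_ext star (f1 x) (f2 x)) \<xi>"
      using enn_powr_mono[OF _ exps(1)] by (fastforce simp: enn_powr_ennreal[OF \<open>0 \<le> w\<close>, symmetric])
  qed
  have mS: "ennreal (w powr \<xi>) \<le> m S"
  proof -
    have "w powr \<xi> \<le> u powr \<xi>" "w powr \<xi> \<le> v powr \<xi>"
      using \<open>0 \<le> w\<close> \<open>w \<le> u\<close> \<open>w \<le> v\<close> exps(1) by (auto intro: powr_mono2)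
    then show ?thesis using S(2) by (meson ennreal_leI min.boundedI order_trans)
  qed
  have "{x\<in>space M. ennreal (w powr \<xi>) \<le> enn_powr (star_ext star (f1 x) (f2 x)) \<xi>} \<in> sets M"
    by measurable
  from le_sugeno_if_level_set[OF mm S(1) this sub mS] show ?thesis
    by (simp add: w_def)
qed

lemma sugeno_star_ext_powr_ge:
  fixes star :: "real \<Rightarrow> real \<Rightarrow> real"
  assumes f_meas: "f1 \<in> borel_measurable M" "f2 \<in> borel_measurable M"
    and como: "comonotone M f1 f2"
    and star_cont: "continuous_on ({0..} \<times> {0..}) (\<lambda>(a, b). star a b)"
    and star_mono: "\<And>a a' b b'. 0 \<le> a \<Longrightarrow> a \<le> a' \<Longrightarrow> 0 \<le> b \<Longrightarrow> b \<le> b'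
                       \<Longrightarrow> star a b \<le> star a' b'"
    and star_nonneg: "\<And>a b. 0 \<le> a \<Longrightarrow> 0 \<le> b \<Longrightarrow> 0 \<le> star a b"
    and star_min: "\<And>a b. 0 \<le> a \<Longrightarrow> 0 \<le> b \<Longrightarrow> star a b \<le> min a b"
    and exps: "0 < \<xi>" "\<xi> * \<omega> = 1"
    and mm: "monotone_measure M m"
  shows "ennreal (star (enn2real (sugeno M m (\<lambda>x. enn_powr (f1 x) \<xi>)) powr \<omega>)
                       (enn2real (sugeno M m (\<lambda>x. enn_powr (f2 x) \<xi>)) powr \<omega>))
           \<le> enn_powr (sugeno M m (\<lambda>x. enn_powr (star_ext star (f1 x) (f2 x)) \<xi>)) \<omega>"
    (is "ennreal (star (enn2real ?A powr \<omega>) (enn2real ?B powr \<omega>)) \<le> enn_powr ?C \<omega>")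
proof (cases "?C = \<infinity>")
  case False
  then obtain L where L: "?C = ennreal L" "0 \<le> L" by (cases ?C) auto
  define a where "a = enn2real ?A"
  define b where "b = enn2real ?B"
  have "0 < \<omega>" using exps by (metis zero_less_mult_pos zero_less_one)
  note key = star_powr_le_sugeno[OF f_meas como star_cont star_mono star_nonneg star_min exps mm]
  have "star (a powr \<omega>) (b powr \<omega>) \<le> L powr \<omega>"
  proof (cases "a = 0 \<or> b = 0")
    case True
    then show ?thesis using star_min[of "a powr \<omega>" "b powr \<omega>"] by (auto intro: order_trans)
  next
    case False
    then have "0 < a" "0 < b" unfolding a_def b_def by (simp_all add: less_le)
    \<comment> \<open>A positive \<open>enn2real\<close> value rules out \<open>\<infinity>\<close>, so \<open>a\<close> and \<open>b\<close> are the integrals themselves.\<close>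
    then have A: "?A = ennreal a" and B: "?B = ennreal b"
      unfolding a_def b_def by (auto simp: ennreal_enn2real_if)
    have root_less: "ennreal (u powr \<xi>) < ennreal c"
      if "0 < u" "u < c powr \<omega>" "0 < c" for u c
    proof -
      have "u powr \<xi> < (c powr \<omega>) powr \<xi>"
        using that exps(1) by (intro powr_less_mono2) auto
      also have "\<dots> = c" using that(3) exps(2) by (simp add: powr_powr mult.commute)
      finally show ?thesis using that(3) by (simp add: ennreal_lessI)
    qed
    show ?thesis
    proof (rule continuous_on_le_from_below[OF star_cont])
      fix u v assume uv: "0 < u" "u < a powr \<omega>" "0 < v" "v < b powr \<omega>"
      have "ennreal (star u v powr \<xi>) \<le> ennreal L"
        using key[of u v] root_less[OF uv(1,2) \<open>0 < a\<close>] root_less[OF uv(3,4) \<open>0 < b\<close>] uv A B L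
        by simp
      then have "(star u v powr \<xi>) powr \<omega> \<le> L powr \<omega>"
        using L(2) \<open>0 < \<omega>\<close> by (intro powr_mono2) (auto simp: ennreal_le_iff)
      then show "star u v \<le> L powr \<omega>"
        using star_nonneg[of u v] uv exps(2) by (simp add: powr_powr)
    qed (use \<open>0 < a\<close> \<open>0 < b\<close> in auto)
  qed
  then show ?thesis
    unfolding a_def b_def using L by (simp add: enn_powr_def ennreal_leI)
qed (simp add: enn_powr_def)

theorem corollary3p8:
  fixes M :: "'a measure" and m :: "'a set \<Rightarrow> ennreal"
    and f1 f2 :: "'a \<Rightarrow> ennreal" and star :: "real \<Rightarrow> real \<Rightarrow> real"
    and \<omega>0 \<omega>1 \<omega>2 \<xi>0 \<xi>1 \<xi>2 :: real
  assumes f1_meas: "f1 \<in> borel_measurable M" and f2_meas: "f2 \<in> borel_measurable M"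
    and como: "comonotone M f1 f2"
    and star_cont: "continuous_on ({0..} \<times> {0..}) (\<lambda>(a, b). star a b)"
    and star_mono: "\<And>a a' b b'. 0 \<le> a \<Longrightarrow> a \<le> a' \<Longrightarrow> 0 \<le> b \<Longrightarrow> b \<le> b'
                       \<Longrightarrow> star a b \<le> star a' b'"
    and star_nonneg: "\<And>a b. 0 \<le> a \<Longrightarrow> 0 \<le> b \<Longrightarrow> 0 \<le> star a b"
    and star_min: "\<And>a b. 0 \<le> a \<Longrightarrow> 0 \<le> b \<Longrightarrow> star a b \<le> min a b"
    and pos: "\<omega>0 > 0" "\<omega>1 > 0" "\<omega>2 > 0" "\<xi>0 > 0" "\<xi>1 > 0" "\<xi>2 > 0"
    and exp0: "\<And>x::real. 0 \<le> x \<Longrightarrow> x powr (1 / (\<xi>0 * \<omega>0)) \<le> x"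
    and exp1: "\<And>x::real. 0 \<le> x \<Longrightarrow> x \<le> x powr (1 / (\<xi>1 * \<omega>1))"
    and exp2: "\<And>x::real. 0 \<le> x \<Longrightarrow> x \<le> x powr (1 / (\<xi>2 * \<omega>2))"
    and exp1': "\<And>x::real. 0 \<le> x \<Longrightarrow> x powr (\<omega>1 / \<omega>0) \<le> x"
    and exp2': "\<And>x::real. 0 \<le> x \<Longrightarrow> x powr (\<omega>2 / \<omega>0) \<le> x"
    and mm: "monotone_measure M m"
    and fin1: "sugeno M m (\<lambda>x. enn_powr (f1 x) \<xi>1) < \<infinity>"
    and fin2: "sugeno M m (\<lambda>x. enn_powr (f2 x) \<xi>2) < \<infinity>"
  shows "enn_powr (sugeno M m (\<lambda>x. enn_powr (star_ext star (f1 x) (f2 x)) \<xi>0)) \<omega>0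
           \<ge> ennreal (star (enn2real (sugeno M m (\<lambda>x. enn_powr (f1 x) \<xi>1)) powr \<omega>1)
                           (enn2real (sugeno M m (\<lambda>x. enn_powr (f2 x) \<xi>2)) powr \<omega>2))"
proof -
  have "\<xi>0 * \<omega>0 = 1" "\<xi>1 * \<omega>1 = 1" "\<xi>2 * \<omega>2 = 1"
    using powr_eq_1_if_powr_le_self[OF exp0] powr_eq_1_if_self_le_powr[OF exp1]
      powr_eq_1_if_self_le_powr[OF exp2] pos by (simp_all add: field_simps)
  moreover have "\<omega>1 = \<omega>0" "\<omega>2 = \<omega>0"
    using powr_eq_1_if_powr_le_self[OF exp1'] powr_eq_1_if_powr_le_self[OF exp2'] pos
    by (simp_all add: field_simps)
  ultimately have "\<xi>1 = \<xi>0" "\<xi>2 = \<xi>0"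
    using pos by (metis mult_right_cancel less_irrefl)+
  with \<open>\<omega>1 = \<omega>0\<close> \<open>\<omega>2 = \<omega>0\<close> \<open>\<xi>0 * \<omega>0 = 1\<close> show ?thesis
    using sugeno_star_ext_powr_ge[OF f1_meas f2_meas como star_cont star_mono star_nonneg star_min
        pos(4) _ mm]
    by simp
qed

end
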